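(* Let $\mathcal{A}^*$ be a graded-commutative differential graded algebra over a field $\mathbb{k}$ of characteristic zero, let $\mathcal{N}^*$ be a differential graded module over $\mathcal{A}^*$, and let $\xi_1,\xi_2\in\mathcal{A}^1$ be cocycles with $\xi_1-\xi_2=df$ for some $f\in\mathcal{A}^0$. Then the exact couples (and hence the spectral sequences) associated to $(\mathcal{N}^*,\xi_1)$ and to $(\mathcal{N}^*,\xi_2)$ by the construction described in the context are isomorphic. In other words, the deformation spectral sequence depends only on the cohomology class of $\xi$.
   Context: A differential graded module (DGM) $\mathcal{N}^*$ over $\mathcal{A}^*$ is a graded $\mathcal{A}^*$-module with a differential $d$ of degree $+1$ satisfying the Leibniz rule with respect to the pairing $\mathcal{A}^*\times\mathcal{N}^*\to\mathcal{N}^*$. For a cocycle $\xi\in\mathcal{A}^1$, let $\mathcal{N}^*[[t]]$ be the graded module of formal power series in $t$ with coefficients in $\mathcal{N}^*$ (degree-$k$ part: series with coefficients in $\mathcal{N}^k$), endowed with the differential $D_t x=dx+t\xi x$. The short exact sequence of DGMs $0\to\mathcal{N}^*[[t]]\xrightarrow{t}\mathcal{N}^*[[t]]\xrightarrow{\pi}\mathcal{N}^*\to 0$ (with $\pi$ setting $t=0$) induces a long exact sequence in cohomology, regarded as an exact couple $(D,E,i,j,k)$ with $D=H^*(\mathcal{N}^*[[t]],D_t)$, $E=H^*(\mathcal{N}^*,d)$, $i$ = multiplication by $t$, $j=\pi_*$, $k$ = the connecting homomorphism. Its spectral sequence is the one obtained by iterating Massey's derived couple construction ($E'=\mathrm{Ker}(jk)/\mathrm{Im}(jk)$,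 $D'=i(D)$, with induced maps). *)

theory Defs
  imports Complex_Main "HOL-Library.Function_Algebras"
begin

text \<open>A graded k-vector space V^* is modelled inside an ambient k-vector space
(type 'v with scalar multiplication s) by a family of subspaces V p (p a natural
number), pairwise intersecting trivially (so their sum is direct).\<close>

definition graded_vs :: "('k::field \<Rightarrow> 'v::ab_group_add \<Rightarrow> 'v) \<Rightarrow> (nat \<Rightarrow> 'v set) \<Rightarrow> bool" where
  "graded_vs s V \<longleftrightarrow> vector_space s \<and> (\<forall>p. 0 \<in> V p \<and> (\<forall>x\<in>V p. \<forall>y\<in>V p. x + y \<in> V p) \<and> (\<forall>c. \<forall>x\<in>V p. s c x \<in> V p)) \<and>
     (\<forall>p q. p \<noteq> q \<longrightarrow> V p \<inter> V q = {0})"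

definition cdga ::
  "('k::field_char_0 \<Rightarrow> 'a::ab_group_add \<Rightarrow> 'a) \<Rightarrow> (nat \<Rightarrow> 'a set) \<Rightarrow>
   ('a \<Rightarrow> 'a \<Rightarrow> 'a) \<Rightarrow> 'a \<Rightarrow> ('a \<Rightarrow> 'a) \<Rightarrow> bool" where
  "cdga sA A mul one dA \<longleftrightarrow> graded_vs sA A \<and>
   (\<forall>p q. \<forall>a\<in>A p. \<forall>b\<in>A q. mul a b \<in> A (p + q)) \<and>
   (\<forall>p q. \<forall>a\<in>A p. \<forall>a'\<in>A p. \<forall>b\<in>A q. mul (a + a') b = mul a b + mul a' b) \<and>
   (\<forall>p q. \<forall>a\<in>A p. \<forall>b\<in>A q. \<forall>b'\<in>A q. mul a (b + b') = mul a b + mul a b') \<and>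
   (\<forall>p q c. \<forall>a\<in>A p. \<forall>b\<in>A q.
       mul (sA c a) b = sA c (mul a b) \<and> mul a (sA c b) = sA c (mul a b)) \<and>
   (\<forall>p q r. \<forall>a\<in>A p. \<forall>b\<in>A q. \<forall>e\<in>A r. mul (mul a b) e = mul a (mul b e)) \<and>
   one \<in> A 0 \<and> (\<forall>p. \<forall>a\<in>A p. mul one a = a \<and> mul a one = a) \<and>
   (\<forall>p q. \<forall>a\<in>A p. \<forall>b\<in>A q. mul a b = (if even (p * q) then mul b a else - mul b a)) \<and>
   (\<forall>p. \<forall>a\<in>A p. dA a \<in> A (Suc p)) \<and>
   (\<forall>p c. \<forall>a\<in>A p. \<forall>b\<in>A p. dA (a + b) = dA a + dA b \<and> dA (sA c a) = sA c (dA a)) \<and>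
   (\<forall>p. \<forall>a\<in>A p. dA (dA a) = 0) \<and>
   (\<forall>p q. \<forall>a\<in>A p. \<forall>b\<in>A q.
       dA (mul a b) = mul (dA a) b + (if even p then mul a (dA b) else - mul a (dA b)))"

definition dgm ::
  "('k::field \<Rightarrow> 'a::ab_group_add \<Rightarrow> 'a) \<Rightarrow> (nat \<Rightarrow> 'a set) \<Rightarrow>
   ('a \<Rightarrow> 'a \<Rightarrow> 'a) \<Rightarrow> 'a \<Rightarrow> ('a \<Rightarrow> 'a) \<Rightarrow>
   ('k \<Rightarrow> 'm::ab_group_add \<Rightarrow> 'm) \<Rightarrow> (nat \<Rightarrow> 'm set) \<Rightarrow> ('a \<Rightarrow> 'm \<Rightarrow> 'm) \<Rightarrow> ('m \<Rightarrow> 'm) \<Rightarrow> bool" where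
  "dgm sA A mul one dA sN N act dN \<longleftrightarrow> graded_vs sN N \<and>
   (\<forall>p q. \<forall>a\<in>A p. \<forall>x\<in>N q. act a x \<in> N (p + q)) \<and>
   (\<forall>p q. \<forall>a\<in>A p. \<forall>a'\<in>A p. \<forall>x\<in>N q. act (a + a') x = act a x + act a' x) \<and>
   (\<forall>p q. \<forall>a\<in>A p. \<forall>x\<in>N q. \<forall>x'\<in>N q. act a (x + x') = act a x + act a x') \<and>
   (\<forall>p q c. \<forall>a\<in>A p. \<forall>x\<in>N q.
       act (sA c a) x = sN c (act a x) \<and> act a (sN c x) = sN c (act a x)) \<and>
   (\<forall>p q r. \<forall>a\<in>A p. \<forall>b\<in>A q. \<forall>x\<in>N r. act (mul a b) x = act a (act b x)) \<and>
   (\<forall>q. \<forall>x\<in>N q. act one x = x) \<and>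
   (\<forall>q. \<forall>x\<in>N q. dN x \<in> N (Suc q)) \<and>
   (\<forall>q c. \<forall>x\<in>N q. \<forall>y\<in>N q. dN (x + y) = dN x + dN y \<and> dN (sN c x) = sN c (dN x)) \<and>
   (\<forall>q. \<forall>x\<in>N q. dN (dN x) = 0) \<and>
   (\<forall>p q. \<forall>a\<in>A p. \<forall>x\<in>N q.
       dN (act a x) = act (dA a) x + (if even p then act a (dN x) else - act a (dN x)))"

definition cocyc :: "(nat \<Rightarrow> 'v::ab_group_add set) \<Rightarrow> ('v \<Rightarrow> 'v) \<Rightarrow> nat \<Rightarrow> 'v set" where
  "cocyc C d k = {x \<in> C k. d x = 0}"

definition cobound :: "(nat \<Rightarrow> 'v::ab_group_add set) \<Rightarrow> ('v \<Rightarrow> 'v) \<Rightarrow> nat \<Rightarrow> 'v set" where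
  "cobound C d k = (if k = 0 then {0} else d ` C (k - 1))"

definition ccls :: "(nat \<Rightarrow> 'v::ab_group_add set) \<Rightarrow> ('v \<Rightarrow> 'v) \<Rightarrow> nat \<Rightarrow> 'v \<Rightarrow> 'v set" where
  "ccls C d k x = (\<lambda>b. x + b) ` cobound C d k"

definition coh :: "(nat \<Rightarrow> 'v::ab_group_add set) \<Rightarrow> ('v \<Rightarrow> 'v) \<Rightarrow> nat \<Rightarrow> 'v set set" where
  "coh C d k = ccls C d k ` cocyc C d k"

definition crep :: "'v set \<Rightarrow> 'v" where
  "crep X = (SOME x. x \<in> X)"

definition coh_add :: "(nat \<Rightarrow> 'v::ab_group_add set) \<Rightarrow> ('v \<Rightarrow> 'v) \<Rightarrow> nat \<Rightarrow> 'v set \<Rightarrow> 'v set \<Rightarrow> 'v set" where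
  "coh_add C d k X Y = ccls C d k (crep X + crep Y)"

definition coh_smul :: "('k \<Rightarrow> 'v::ab_group_add \<Rightarrow> 'v) \<Rightarrow> (nat \<Rightarrow> 'v set) \<Rightarrow> ('v \<Rightarrow> 'v) \<Rightarrow> nat \<Rightarrow> 'k \<Rightarrow> 'v set \<Rightarrow> 'v set" where
  "coh_smul s C d k c X = ccls C d k (s c (crep X))"

definition coh_map :: "(nat \<Rightarrow> 'w::ab_group_add set) \<Rightarrow> ('w \<Rightarrow> 'w) \<Rightarrow> nat \<Rightarrow> ('v \<Rightarrow> 'w) \<Rightarrow> 'v set \<Rightarrow> 'w set" where
  "coh_map C' d' k f X = ccls C' d' k (f (crep X))"

text \<open>Connecting homomorphism H^k(C) \<rightarrow> H^(k+1)(A) of a short exact sequence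
  0 \<rightarrow> A --alpha--> B --beta--> C \<rightarrow> 0 of complexes:
  [c] \<mapsto> [a] where beta b = c and alpha a = dB b.\<close>
definition coh_conn ::
  "(nat \<Rightarrow> 'u::ab_group_add set) \<Rightarrow> ('u \<Rightarrow> 'u) \<Rightarrow> (nat \<Rightarrow> 'v::ab_group_add set) \<Rightarrow> ('v \<Rightarrow> 'v) \<Rightarrow>
   ('u \<Rightarrow> 'v) \<Rightarrow> ('v \<Rightarrow> 'w) \<Rightarrow> nat \<Rightarrow> 'w set \<Rightarrow> 'u set" where
  "coh_conn CA dA CB dB alpha beta k X =
     ccls CA dA (Suc k)
       (SOME a. a \<in> CA (Suc k) \<and> (\<exists>b\<in>CB k. beta b = crep X \<and> alpha a = dB b))"

record ('d, 'e, 'k) vs_couple =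
  cD :: "nat \<Rightarrow> 'd set"
  cE :: "nat \<Rightarrow> 'e set"
  addD :: "nat \<Rightarrow> 'd \<Rightarrow> 'd \<Rightarrow> 'd"
  smulD :: "nat \<Rightarrow> 'k \<Rightarrow> 'd \<Rightarrow> 'd"
  addE :: "nat \<Rightarrow> 'e \<Rightarrow> 'e \<Rightarrow> 'e"
  smulE :: "nat \<Rightarrow> 'k \<Rightarrow> 'e \<Rightarrow> 'e"
  ci :: "nat \<Rightarrow> 'd \<Rightarrow> 'd"   \<comment> \<open>D^k \<rightarrow> D^k\<close>
  cj :: "nat \<Rightarrow> 'd \<Rightarrow> 'e"   \<comment> \<open>D^k \<rightarrow> E^k\<close>
  ck :: "nat \<Rightarrow> 'e \<Rightarrow> 'd"   \<comment> \<open>E^k \<rightarrow> D^(k+1)\<close>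

definition couple_iso :: "('d, 'e, 'k) vs_couple \<Rightarrow> ('d2, 'e2, 'k) vs_couple \<Rightarrow> bool" where
  "couple_iso C1 C2 \<longleftrightarrow> (\<exists>phiD phiE. \<forall>k.
     bij_betw (phiD k) (cD C1 k) (cD C2 k) \<and>
     bij_betw (phiE k) (cE C1 k) (cE C2 k) \<and>
     (\<forall>X\<in>cD C1 k. \<forall>Y\<in>cD C1 k. phiD k (addD C1 k X Y) = addD C2 k (phiD k X) (phiD k Y)) \<and>
     (\<forall>c. \<forall>X\<in>cD C1 k. phiD k (smulD C1 k c X) = smulD C2 k c (phiD k X)) \<and>
     (\<forall>X\<in>cE C1 k. \<forall>Y\<in>cE C1 k. phiE k (addE C1 k X Y) = addE C2 k (phiE k X) (phiE k Y)) \<and>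
     (\<forall>c. \<forall>X\<in>cE C1 k. phiE k (smulE C1 k c X) = smulE C2 k c (phiE k X)) \<and>
     (\<forall>X\<in>cD C1 k. phiD k (ci C1 k X) = ci C2 k (phiD k X)) \<and>
     (\<forall>X\<in>cD C1 k. phiE k (cj C1 k X) = cj C2 k (phiD k X)) \<and>
     (\<forall>Y\<in>cE C1 k. phiD (Suc k) (ck C1 k Y) = ck C2 k (phiE k Y)))"

text \<open>Degree-k part of N^*[[t]]: power series sum_n s(n) t^n with all s(n) in N^k.\<close>
definition ps_space :: "(nat \<Rightarrow> 'm set) \<Rightarrow> nat \<Rightarrow> (nat \<Rightarrow> 'm) set" where
  "ps_space N k = {s. \<forall>n. s n \<in> N k}"

text \<open>D_t s = d s + t xi s, coefficientwise.\<close>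
definition ps_diff :: "('a \<Rightarrow> 'm \<Rightarrow> 'm) \<Rightarrow> ('m::ab_group_add \<Rightarrow> 'm) \<Rightarrow> 'a \<Rightarrow> (nat \<Rightarrow> 'm) \<Rightarrow> (nat \<Rightarrow> 'm)" where
  "ps_diff act dN xi s = (\<lambda>n. dN (s n) + (if n = 0 then 0 else act xi (s (n - 1))))"

text \<open>Multiplication by t.\<close>
definition tshift :: "(nat \<Rightarrow> 'm::zero) \<Rightarrow> (nat \<Rightarrow> 'm)" where
  "tshift s = (\<lambda>n. if n = 0 then 0 else s (n - 1))"

text \<open>Setting t = 0.\<close>
definition ev0 :: "(nat \<Rightarrow> 'm) \<Rightarrow> 'm" where
  "ev0 s = s 0"

definition ps_smul :: "('k \<Rightarrow> 'm \<Rightarrow> 'm) \<Rightarrow> 'k \<Rightarrow> (nat \<Rightarrow> 'm) \<Rightarrow> (nat \<Rightarrow> 'm)" where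
  "ps_smul sN c s = (\<lambda>n. sN c (s n))"

text \<open>The exact couple (D, E, i, j, k) with D = H(N[[t]], D_t), E = H(N, d),
  i = multiplication by t, j = (t=0)_*, k = connecting homomorphism.\<close>
definition deformation_couple ::
  "('k \<Rightarrow> 'm::ab_group_add \<Rightarrow> 'm) \<Rightarrow> (nat \<Rightarrow> 'm set) \<Rightarrow> ('a \<Rightarrow> 'm \<Rightarrow> 'm) \<Rightarrow> ('m \<Rightarrow> 'm) \<Rightarrow> 'a \<Rightarrow>
   ((nat \<Rightarrow> 'm) set, 'm set, 'k) vs_couple" where
  "deformation_couple sN N act dN xi =
     (let PS = ps_space N; Dt = ps_diff act dN xi in
      \<lparr> cD = coh PS Dt,
        cE = coh N dN,
        addD = coh_add PS Dt,
        smulD = coh_smul (ps_smul sN) PS Dt,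
        addE = coh_add N dN,
        smulE = coh_smul sN N dN,
        ci = (\<lambda>k. coh_map PS Dt k tshift),
        cj = (\<lambda>k. coh_map N dN k ev0),
        ck = coh_conn PS Dt PS Dt tshift ev0 \<rparr>)"

end

theory Submission
  imports Defs
begin

text \<open>Multiplication by \<open>e\<^sup>t\<^sup>f = \<Sum>\<^sub>k t\<^sup>k f\<^sup>k / k!\<close> is an automorphism of each \<open>N\<^sup>q[[t]]\<close>
  (triangular with identity diagonal) commuting with \<open>t\<close>, with scalars and with \<open>t = 0\<close>.
  As \<open>d(e\<^sup>t\<^sup>f) = t df e\<^sup>t\<^sup>f\<close> and \<open>\<xi>\<^sub>1 = df + \<xi>\<^sub>2\<close>, it satisfies \<open>e\<^sup>t\<^sup>f(d + t\<xi>\<^sub>1) = (d + t\<xi>\<^sub>2)e\<^sup>t\<^sup>f\<close>,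
  so it is a chain isomorphism between the two deformation complexes. Being the identity
  modulo \<open>t\<close>, it induces an isomorphism of the two long exact sequences that is the identity
  on \<open>H(N)\<close>.\<close>

locale cochain_complex =
  fixes C :: "nat \<Rightarrow> 'v::ab_group_add set" and d :: "'v \<Rightarrow> 'v"
  assumes zero_closed: "0 \<in> C k"
    and add_closed: "x \<in> C k \<Longrightarrow> y \<in> C k \<Longrightarrow> x + y \<in> C k"
    and uminus_closed: "x \<in> C k \<Longrightarrow> - x \<in> C k"
    and d_closed: "x \<in> C k \<Longrightarrow> d x \<in> C (Suc k)"
    and d_add: "x \<in> C k \<Longrightarrow> y \<in> C k \<Longrightarrow> d (x + y) = d x + d y"
    and d_d: "x \<in> C k \<Longrightarrow> d (d x) = 0"
begin

lemma diff_closed: "x \<in> C k \<Longrightarrow> y \<in> C k \<Longrightarrow> x - y \<in> C k"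
  using add_closed[of x k "- y"] uminus_closed[of y k] by simp

lemma d_zero: "d 0 = 0"
  using d_add[of 0 0 0] zero_closed[of 0] by simp

lemma d_uminus: "x \<in> C k \<Longrightarrow> d (- x) = - d x"
  using d_add[of x k "- x"] uminus_closed[of x k] d_zero by (simp add: add_eq_0_iff)

lemma d_diff: "x \<in> C k \<Longrightarrow> y \<in> C k \<Longrightarrow> d (x - y) = d x - d y"
  using d_add[of x k "- y"] uminus_closed[of y k] d_uminus[of y k] by simp

lemma cobound_subset: "b \<in> cobound C d k \<Longrightarrow> b \<in> C k"
  by (cases k) (auto simp: cobound_def zero_closed d_closed)

lemma zero_cobound: "0 \<in> cobound C d k"
  by (cases k) (auto simp: cobound_def intro!: image_eqI[where x = 0] zero_closed d_zero[symmetric])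

lemma add_cobound: "a \<in> cobound C d k \<Longrightarrow> b \<in> cobound C d k \<Longrightarrow> a + b \<in> cobound C d k"
  by (cases k) (auto simp: cobound_def intro!: image_eqI d_add[symmetric] add_closed)

lemma uminus_cobound: "a \<in> cobound C d k \<Longrightarrow> - a \<in> cobound C d k"
  by (cases k) (auto simp: cobound_def intro!: image_eqI d_uminus[symmetric] uminus_closed)

lemma ccls_eqI: "x - y \<in> cobound C d k \<Longrightarrow> ccls C d k x = ccls C d k y"
proof -
  assume h: "x - y \<in> cobound C d k"
  have "x + b \<in> ccls C d k y" if "b \<in> cobound C d k" for b
    using add_cobound[OF h that] unfolding ccls_def
    by (intro image_eqI[where x = "x - y + b"]) (auto simp: algebra_simps)
  moreover have "y + b \<in> ccls C d k x" if "b \<in> cobound C d k" for b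
    using add_cobound[OF uminus_cobound[OF h] that] unfolding ccls_def
    by (intro image_eqI[where x = "- (x - y) + b"]) (auto simp: algebra_simps)
  ultimately show ?thesis unfolding ccls_def by blast
qed

lemma in_ccls: "x \<in> ccls C d k x"
  unfolding ccls_def using zero_cobound by (intro image_eqI[where x = 0]) auto

lemma ccls_eqD: "ccls C d k x = ccls C d k y \<Longrightarrow> x - y \<in> cobound C d k"
  using in_ccls[of x k] by (auto simp: ccls_def)

lemma crep_ccls: "crep (ccls C d k x) - x \<in> cobound C d k"
proof -
  have "crep (ccls C d k x) \<in> ccls C d k x"
    unfolding crep_def by (rule someI) (rule in_ccls)
  then show ?thesis by (auto simp: ccls_def)
qed

lemma crep_cocyc: "X \<in> coh C d k \<Longrightarrow> crep X \<in> cocyc C d k"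
proof -
  assume "X \<in> coh C d k"
  then obtain x where x: "x \<in> cocyc C d k" "X = ccls C d k x" by (auto simp: coh_def)
  obtain b where b: "b \<in> cobound C d k" "crep X = x + b"
    using crep_ccls[of k x] x(2) by (metis add.commute diff_add_cancel)
  have "b \<in> cocyc C d k"
    using b(1) by (cases k) (auto simp: cobound_def cocyc_def d_zero zero_closed d_closed d_d)
  with x(1) show ?thesis by (auto simp: b(2) cocyc_def add_closed d_add)
qed

lemma coh_add_ccls: "coh_add C d k (ccls C d k a) (ccls C d k b) = ccls C d k (a + b)"
  unfolding coh_add_def
  by (rule ccls_eqI) (use add_cobound[OF crep_ccls[of k a] crep_ccls[of k b]] in \<open>simp add: algebra_simps\<close>)

lemma coh_smul_ccls:
  assumes a: "a \<in> C k"
    and s_add: "\<And>x y. x \<in> C k \<Longrightarrow> y \<in> C k \<Longrightarrow> s c (x + y) = s c x + s c y"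
    and s_cobound: "\<And>b. b \<in> cobound C d k \<Longrightarrow> s c b \<in> cobound C d k"
  shows "coh_smul s C d k c (ccls C d k a) = ccls C d k (s c a)"
proof -
  define b where "b = crep (ccls C d k a) - a"
  have b: "b \<in> cobound C d k" unfolding b_def by (rule crep_ccls)
  have "s c (crep (ccls C d k a)) = s c a + s c b"
    using s_add[OF a cobound_subset[OF b]] by (simp add: b_def)
  then show ?thesis unfolding coh_smul_def by (intro ccls_eqI) (simp add: s_cobound[OF b])
qed

end

lemma coh_map_ccls:
  assumes "cochain_complex C d" and "cochain_complex C' d'" and a: "a \<in> C k"
    and g_add: "\<And>x y. x \<in> C k \<Longrightarrow> y \<in> C k \<Longrightarrow> g (x + y) = g x + g y"
    and g_cobound: "\<And>b. b \<in> cobound C d k \<Longrightarrow> g b \<in> cobound C' d' k"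
  shows "coh_map C' d' k g (ccls C d k a) = ccls C' d' k (g a)"
proof -
  interpret C: cochain_complex C d by fact
  interpret C': cochain_complex C' d' by fact
  define b where "b = crep (ccls C d k a) - a"
  have b: "b \<in> cobound C d k" unfolding b_def by (rule C.crep_ccls)
  have "g (crep (ccls C d k a)) = g a + g b"
    using g_add[OF a C.cobound_subset[OF b]] by (simp add: b_def)
  then show ?thesis unfolding coh_map_def by (intro C'.ccls_eqI) (simp add: g_cobound[OF b])
qed

locale chain_iso = C1: cochain_complex C1 d1 + C2: cochain_complex C2 d2
  for C1 :: "nat \<Rightarrow> 'v::ab_group_add set" and d1 and C2 :: "nat \<Rightarrow> 'w::ab_group_add set" and d2 +
  fixes E :: "'v \<Rightarrow> 'w"
  assumes map_add: "x \<in> C1 k \<Longrightarrow> y \<in> C1 k \<Longrightarrow> E (x + y) = E x + E y"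
    and map_d: "x \<in> C1 k \<Longrightarrow> E (d1 x) = d2 (E x)"
    and bij: "bij_betw E (C1 k) (C2 k)"
begin

lemma map_closed: "x \<in> C1 k \<Longrightarrow> E x \<in> C2 k"
  using bij[of k] by (auto dest: bij_betw_apply)

lemma map_zero: "E 0 = 0"
  using map_add[of 0 0 0] C1.zero_closed[of 0] by simp

lemma map_diff: "x \<in> C1 k \<Longrightarrow> y \<in> C1 k \<Longrightarrow> E (x - y) = E x - E y"
  using map_add[of "x - y" k y] C1.diff_closed[of x k y] by (simp add: eq_diff_eq)

lemma map_cobound: "b \<in> cobound C1 d1 k \<Longrightarrow> E b \<in> cobound C2 d2 k"
  by (cases k) (auto simp: cobound_def map_zero map_d intro!: map_closed)

lemma coh_map_ccls_iso: "x \<in> C1 k \<Longrightarrow> coh_map C2 d2 k E (ccls C1 d1 k x) = ccls C2 d2 k (E x)"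
  by (rule coh_map_ccls[OF C1.cochain_complex_axioms C2.cochain_complex_axioms])
    (auto simp: map_add map_cobound)

lemma map_inj: "x \<in> C1 k \<Longrightarrow> y \<in> C1 k \<Longrightarrow> E x = E y \<Longrightarrow> x = y"
  using bij[of k] by (auto simp: bij_betw_def inj_on_def)

lemma map_surj: "z \<in> C2 k \<Longrightarrow> \<exists>x\<in>C1 k. z = E x"
  using bij[of k] by (auto simp: bij_betw_def)

lemma cobound_reflect:
  assumes x: "x \<in> C1 k" and b: "E x \<in> cobound C2 d2 k"
  shows "x \<in> cobound C1 d1 k"
proof (cases k)
  case 0
  then show ?thesis using b map_zero map_inj[OF x C1.zero_closed] by (simp add: cobound_def)
next
  case (Suc j)
  then obtain w where w: "w \<in> C2 j" "E x = d2 w" using b by (auto simp: cobound_def)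
  obtain v where v: "v \<in> C1 j" "w = E v" using map_surj[OF w(1)] by auto
  have "x = d1 v"
    using map_inj[OF x, of "d1 v"] C1.d_closed[OF v(1)] w v map_d[OF v(1)] Suc by simp
  then show ?thesis using Suc v by (auto simp: cobound_def)
qed

lemma bij_betw_coh_map: "bij_betw (coh_map C2 d2 k E) (coh C1 d1 k) (coh C2 d2 k)"
proof (rule bij_betwI')
  fix X Y assume "X \<in> coh C1 d1 k" "Y \<in> coh C1 d1 k"
  then obtain x y where x: "x \<in> cocyc C1 d1 k" "X = ccls C1 d1 k x"
    and y: "y \<in> cocyc C1 d1 k" "Y = ccls C1 d1 k y" by (auto simp: coh_def)
  have xC: "x \<in> C1 k" and yC: "y \<in> C1 k" using x y by (auto simp: cocyc_def)
  show "(coh_map C2 d2 k E X = coh_map C2 d2 k E Y) = (X = Y)"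
  proof
    assume "coh_map C2 d2 k E X = coh_map C2 d2 k E Y"
    then have "E (x - y) \<in> cobound C2 d2 k"
      using x y xC yC by (simp add: coh_map_ccls_iso C2.ccls_eqD map_diff)
    then show "X = Y"
      using x y C1.ccls_eqI cobound_reflect[OF C1.diff_closed[OF xC yC]] by simp
  qed simp
next
  fix X assume "X \<in> coh C1 d1 k"
  then obtain x where x: "x \<in> cocyc C1 d1 k" "X = ccls C1 d1 k x" by (auto simp: coh_def)
  then show "coh_map C2 d2 k E X \<in> coh C2 d2 k"
    by (auto simp: coh_map_ccls_iso coh_def cocyc_def map_closed map_zero map_d[symmetric])
next
  fix Z assume "Z \<in> coh C2 d2 k"
  then obtain z where z: "z \<in> cocyc C2 d2 k" "Z = ccls C2 d2 k z" by (auto simp: coh_def)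
  obtain v where v: "v \<in> C1 k" "z = E v" using map_surj z by (auto simp: cocyc_def)
  have "E (d1 v) = E 0" using z v map_d[OF v(1)] map_zero by (simp add: cocyc_def)
  then have "v \<in> cocyc C1 d1 k"
    using map_inj[OF C1.d_closed[OF v(1)] C1.zero_closed] v by (simp add: cocyc_def)
  then show "\<exists>X\<in>coh C1 d1 k. Z = coh_map C2 d2 k E X"
    using v z by (intro bexI[where x = "ccls C1 d1 k v"]) (auto simp: coh_map_ccls_iso coh_def)
qed

end

lemma tshift_add: "tshift (x + y) = tshift x + tshift (y :: nat \<Rightarrow> 'm::ab_group_add)"
  by (simp add: tshift_def fun_eq_iff)

lemma tshift_diff: "tshift (x - y) = tshift x - tshift (y :: nat \<Rightarrow> 'm::ab_group_add)"
  by (simp add: tshift_def fun_eq_iff)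

lemma tshift_inj: "tshift x = tshift y \<Longrightarrow> x = y"
proof
  fix n assume "tshift x = tshift y"
  then have "tshift x (Suc n) = tshift y (Suc n)" by simp
  then show "x n = y n" by (simp add: tshift_def)
qed

locale dg_module =
  fixes sA :: "'k::field_char_0 \<Rightarrow> 'a::ab_group_add \<Rightarrow> 'a"
    and A :: "nat \<Rightarrow> 'a set" and mul :: "'a \<Rightarrow> 'a \<Rightarrow> 'a" and one :: 'a and dA :: "'a \<Rightarrow> 'a"
    and sN :: "'k \<Rightarrow> 'm::ab_group_add \<Rightarrow> 'm"
    and N :: "nat \<Rightarrow> 'm set" and act :: "'a \<Rightarrow> 'm \<Rightarrow> 'm" and dN :: "'m \<Rightarrow> 'm"
  assumes cdga: "cdga sA A mul one dA"
    and dgm: "dgm sA A mul one dA sN N act dN"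
begin

interpretation A: vector_space sA
  using cdga by (simp add: cdga_def graded_vs_def)

interpretation N: vector_space sN
  using dgm by (simp add: dgm_def graded_vs_def)

lemma A_zero: "0 \<in> A p"
  using cdga by (simp add: cdga_def graded_vs_def)

lemma A_add: "a \<in> A p \<Longrightarrow> b \<in> A p \<Longrightarrow> a + b \<in> A p"
  using cdga by (simp add: cdga_def graded_vs_def)

lemma mul_graded_comm:
  "a \<in> A p \<Longrightarrow> b \<in> A q \<Longrightarrow> mul a b = (if even (p * q) then mul b a else - mul b a)"
  using cdga by (simp add: cdga_def)

lemma dA_closed: "a \<in> A p \<Longrightarrow> dA a \<in> A (Suc p)"
  using cdga by (simp add: cdga_def)

lemma dA_add: "a \<in> A p \<Longrightarrow> b \<in> A p \<Longrightarrow> dA (a + b) = dA a + dA b"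
  using cdga by (simp add: cdga_def)

lemma dA_dA: "a \<in> A p \<Longrightarrow> dA (dA a) = 0"
  using cdga by (simp add: cdga_def)

lemma N_zero: "0 \<in> N p"
  using dgm by (simp add: dgm_def graded_vs_def)

lemma N_add: "x \<in> N p \<Longrightarrow> y \<in> N p \<Longrightarrow> x + y \<in> N p"
  using dgm by (simp add: dgm_def graded_vs_def)

lemma N_scale: "x \<in> N p \<Longrightarrow> sN c x \<in> N p"
  using dgm by (simp add: dgm_def graded_vs_def)

lemma N_uminus: "x \<in> N p \<Longrightarrow> - x \<in> N p"
  using N_scale[of x p "- 1"] by simp

lemma N_diff: "x \<in> N p \<Longrightarrow> y \<in> N p \<Longrightarrow> x - y \<in> N p"
  using N_add[of x p "- y"] N_uminus[of y p] by simp

lemma N_sum: "(\<And>i. i \<in> S \<Longrightarrow> g i \<in> N p) \<Longrightarrow> sum g S \<in> N p"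
  by (induct S rule: infinite_finite_induct) (auto simp: N_zero N_add)

lemma act_closed: "a \<in> A p \<Longrightarrow> x \<in> N q \<Longrightarrow> act a x \<in> N (p + q)"
  using dgm by (simp add: dgm_def)

lemma act_add_left: "a \<in> A p \<Longrightarrow> a' \<in> A p \<Longrightarrow> x \<in> N q \<Longrightarrow> act (a + a') x = act a x + act a' x"
  using dgm by (simp add: dgm_def)

lemma act_add_right: "a \<in> A p \<Longrightarrow> x \<in> N q \<Longrightarrow> x' \<in> N q \<Longrightarrow> act a (x + x') = act a x + act a x'"
  using dgm by (simp add: dgm_def)

lemma act_scale_right: "a \<in> A p \<Longrightarrow> x \<in> N q \<Longrightarrow> act a (sN c x) = sN c (act a x)"
  using dgm by (simp add: dgm_def)

lemma act_mul: "a \<in> A p \<Longrightarrow> b \<in> A q \<Longrightarrow> x \<in> N r \<Longrightarrow> act (mul a b) x = act a (act b x)"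
  using dgm by (simp add: dgm_def)

lemma dN_closed: "x \<in> N q \<Longrightarrow> dN x \<in> N (Suc q)"
  using dgm by (simp add: dgm_def)

lemma dN_add: "x \<in> N q \<Longrightarrow> y \<in> N q \<Longrightarrow> dN (x + y) = dN x + dN y"
  using dgm by (simp add: dgm_def)

lemma dN_scale: "x \<in> N q \<Longrightarrow> dN (sN c x) = sN c (dN x)"
  using dgm by (simp add: dgm_def)

lemma dN_dN: "x \<in> N q \<Longrightarrow> dN (dN x) = 0"
  using dgm by (simp add: dgm_def)

lemma dN_act: "a \<in> A p \<Longrightarrow> x \<in> N q \<Longrightarrow>
     dN (act a x) = act (dA a) x + (if even p then act a (dN x) else - act a (dN x))"
  using dgm by (simp add: dgm_def)

lemma act_zero_right: "a \<in> A p \<Longrightarrow> act a 0 = 0"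
  using act_add_right[of a p 0 0 0] N_zero[of 0] by simp

lemma act_zero_left: "x \<in> N q \<Longrightarrow> act 0 x = 0"
  using act_add_left[of 0 0 0 x q] A_zero[of 0] by simp

lemma N_complex: "cochain_complex N dN"
  by unfold_locales (auto simp: N_zero N_add N_uminus dN_closed dN_add dN_dN)

lemma dN_zero: "dN 0 = 0"
  using cochain_complex.d_zero[OF N_complex] .

lemma act_sum: "a \<in> A p \<Longrightarrow> (\<And>i. i \<in> S \<Longrightarrow> h i \<in> N q) \<Longrightarrow> act a (sum h S) = (\<Sum>i\<in>S. act a (h i))"
proof (induct S rule: infinite_finite_induct)
  case (insert i F)
  then show ?case using act_add_right[of a p "h i" q "sum h F"] N_sum[of F h q] by simp
qed (auto simp: act_zero_right)

lemma dN_sum: "(\<And>i. i \<in> S \<Longrightarrow> h i \<in> N q) \<Longrightarrow> dN (sum h S) = (\<Sum>i\<in>S. dN (h i))"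
proof (induct S rule: infinite_finite_induct)
  case (insert i F)
  then show ?case using dN_add[of "h i" q "sum h F"] N_sum[of F h q] by simp
qed (auto simp: dN_zero)

text \<open>Graded commutativity gives \<open>2 a\<^sup>2 = 0\<close>; dividing by 2 needs characteristic zero.\<close>

lemma mul_self_odd: assumes a: "a \<in> A 1" shows "mul a a = 0"
proof -
  define m where "m = mul a a"
  have "m = - m" using mul_graded_comm[OF a a] by (simp add: m_def)
  then have "sA (1 + 1) m = 0"
    by (simp only: A.scale_left_distrib A.scale_one) (metis add.right_inverse)
  then have "sA (inverse (1 + 1) * (1 + 1)) m = 0" by (simp only: A.scale_scale[symmetric]) simp
  then show ?thesis by (simp add: m_def)
qed

lemma ps_complex:
  assumes xi: "xi \<in> A 1" and dxi: "dA xi = 0"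
  shows "cochain_complex (ps_space N) (ps_diff act dN xi)"
proof
  show "0 \<in> ps_space N k" for k by (simp add: ps_space_def N_zero)
  show "x + y \<in> ps_space N k" if "x \<in> ps_space N k" "y \<in> ps_space N k" for k x y
    using that by (simp add: ps_space_def N_add)
  show "- x \<in> ps_space N k" if "x \<in> ps_space N k" for k x
    using that by (simp add: ps_space_def N_uminus)
  show "ps_diff act dN xi x \<in> ps_space N (Suc k)" if "x \<in> ps_space N k" for k x
    using that act_closed[OF xi] by (fastforce simp: ps_space_def ps_diff_def N_add dN_closed N_zero)
  show "ps_diff act dN xi (x + y) = ps_diff act dN xi x + ps_diff act dN xi y"
    if "x \<in> ps_space N k" "y \<in> ps_space N k" for k x y
  proof -
    have xm: "x n \<in> N k" and ym: "y n \<in> N k" for n using that by (simp_all add: ps_space_def)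
    show ?thesis
      by (auto simp: ps_diff_def dN_add[OF xm ym] act_add_right[OF xi xm ym] fun_eq_iff algebra_simps)
  qed
next
  fix k x
  assume "x \<in> ps_space N k"
  then have xm: "x n \<in> N k" for n by (simp add: ps_space_def)
  have d_act: "dN (act xi z) = - act xi (dN z)" if "z \<in> N k" for z
    using dN_act[OF xi that] dxi act_zero_left[of z k] that by simp
  have act_act: "act xi (act xi z) = 0" if "z \<in> N k" for z
    using act_mul[OF xi xi that, symmetric] mul_self_odd[OF xi] act_zero_left[OF that] by simp
  have dxm: "dN (x n) \<in> N (Suc k)" and axm: "act xi (x n) \<in> N (Suc k)" for n
    using dN_closed[OF xm] act_closed[OF xi xm] by simp_all
  have "ps_diff act dN xi (ps_diff act dN xi x) n = 0" for n
  proof (cases n)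
    case 0 then show ?thesis by (simp add: ps_diff_def dN_dN[OF xm])
  next
    case (Suc m)
    then show ?thesis
      using dN_add[OF dxm axm] dN_dN[OF xm] d_act[OF xm] act_add_right[OF xi dxm axm] act_act[OF xm]
      by (cases m) (simp_all add: ps_diff_def)
  qed
  then show "ps_diff act dN xi (ps_diff act dN xi x) = 0" by auto
qed

lemma tshift_closed: "s \<in> ps_space N q \<Longrightarrow> tshift s \<in> ps_space N q"
  by (simp add: ps_space_def tshift_def N_zero)

lemma ps_smul_closed: "s \<in> ps_space N q \<Longrightarrow> ps_smul sN c s \<in> ps_space N q"
  by (simp add: ps_space_def ps_smul_def N_scale)

lemma tshift_ps_diff: "xi \<in> A 1 \<Longrightarrow> tshift (ps_diff act dN xi s) = ps_diff act dN xi (tshift s)"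
  by (auto simp: tshift_def ps_diff_def fun_eq_iff dN_zero act_zero_right)

lemma ps_smul_ps_diff:
  assumes xi: "xi \<in> A 1" and s: "s \<in> ps_space N q"
  shows "ps_smul sN c (ps_diff act dN xi s) = ps_diff act dN xi (ps_smul sN c s)"
proof -
  have sm: "s j \<in> N q" for j using s by (simp add: ps_space_def)
  show ?thesis
    by (auto simp: ps_smul_def ps_diff_def fun_eq_iff dN_scale[OF sm] act_scale_right[OF xi sm]
        N.scale_right_distrib)
qed

context
  fixes xi assumes xi: "xi \<in> A 1" and dxi: "dA xi = 0"
begin

interpretation PS: cochain_complex "ps_space N" "ps_diff act dN xi"
  by (rule ps_complex[OF xi dxi])

lemma coh_smul_ps_ccls:
  assumes a: "a \<in> ps_space N k"
  shows "coh_smul (ps_smul sN) (ps_space N) (ps_diff act dN xi) k c (ccls (ps_space N) (ps_diff act dN xi) k a)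
    = ccls (ps_space N) (ps_diff act dN xi) k (ps_smul sN c a)"
proof (rule PS.coh_smul_ccls[OF a])
  show "ps_smul sN c (x + y) = ps_smul sN c x + ps_smul sN c y" for x y
    by (simp add: ps_smul_def fun_eq_iff N.scale_right_distrib)
  fix b assume b: "b \<in> cobound (ps_space N) (ps_diff act dN xi) k"
  then show "ps_smul sN c b \<in> cobound (ps_space N) (ps_diff act dN xi) k"
  proof (cases k)
    case (Suc j)
    with b obtain w where "w \<in> ps_space N j" "b = ps_diff act dN xi w" by (auto simp: cobound_def)
    then show ?thesis using Suc ps_smul_ps_diff[OF xi] ps_smul_closed by (auto simp: cobound_def)
  qed (simp add: cobound_def ps_smul_def fun_eq_iff)
qed

lemma coh_map_tshift_ccls:
  assumes a: "a \<in> ps_space N k"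
  shows "coh_map (ps_space N) (ps_diff act dN xi) k tshift (ccls (ps_space N) (ps_diff act dN xi) k a)
    = ccls (ps_space N) (ps_diff act dN xi) k (tshift a)"
proof (rule coh_map_ccls[OF PS.cochain_complex_axioms PS.cochain_complex_axioms a])
  show "tshift (x + y) = tshift x + tshift y" for x y :: "nat \<Rightarrow> 'm" by (rule tshift_add)
  fix b assume b: "b \<in> cobound (ps_space N) (ps_diff act dN xi) k"
  then show "tshift b \<in> cobound (ps_space N) (ps_diff act dN xi) k"
  proof (cases k)
    case (Suc j)
    with b obtain w where "w \<in> ps_space N j" "b = ps_diff act dN xi w" by (auto simp: cobound_def)
    then show ?thesis using Suc tshift_ps_diff[OF xi] tshift_closed by (auto simp: cobound_def)
  qed (simp add: cobound_def tshift_def fun_eq_iff)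
qed

lemma coh_map_ev0_ccls:
  assumes a: "a \<in> ps_space N k"
  shows "coh_map N dN k ev0 (ccls (ps_space N) (ps_diff act dN xi) k a) = ccls N dN k (ev0 a)"
proof (rule coh_map_ccls[OF PS.cochain_complex_axioms N_complex a])
  show "ev0 (x + y) = ev0 x + ev0 y" for x y :: "nat \<Rightarrow> 'm" by (simp add: ev0_def)
  fix b assume "b \<in> cobound (ps_space N) (ps_diff act dN xi) k"
  then show "ev0 b \<in> cobound N dN k"
    by (cases k) (auto simp: cobound_def ev0_def ps_diff_def ps_space_def)
qed

text \<open>The constant series \<open>y\<close> lifts a cocycle \<open>y\<close>, and \<open>D\<^sub>t y = t (\<xi> y)\<close>.\<close>

lemma connecting_witness_exists:
  assumes y: "y \<in> cocyc N dN k"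
  shows "\<exists>a. a \<in> ps_space N (Suc k) \<and>
    (\<exists>b\<in>ps_space N k. ev0 b = y \<and> tshift a = ps_diff act dN xi b)"
proof -
  have ym: "y \<in> N k" and dy: "dN y = 0" using y by (auto simp: cocyc_def)
  define b where "b = (\<lambda>n::nat. if n = 0 then y else 0)"
  define a where "a = (\<lambda>n::nat. if n = 0 then act xi y else 0)"
  have "a \<in> ps_space N (Suc k)" using act_closed[OF xi ym] by (auto simp: a_def ps_space_def N_zero)
  moreover have "b \<in> ps_space N k" using ym by (auto simp: b_def ps_space_def N_zero)
  moreover have "tshift a n = ps_diff act dN xi b n" for n
    by (cases n; cases "n - 1") (auto simp: tshift_def ps_diff_def a_def b_def dy dN_zero act_zero_right[OF xi])
  moreover have "ev0 b = y" by (simp add: ev0_def b_def)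
  ultimately show ?thesis by blast
qed

end

context
  fixes xi1 xi2 E
  assumes xi1: "xi1 \<in> A 1" "dA xi1 = 0" and xi2: "xi2 \<in> A 1" "dA xi2 = 0"
    and iso: "chain_iso (ps_space N) (ps_diff act dN xi1) (ps_space N) (ps_diff act dN xi2) E"
    and E_tshift: "\<And>s q. s \<in> ps_space N q \<Longrightarrow> E (tshift s) = tshift (E s)"
    and E_ev0: "\<And>s q. s \<in> ps_space N q \<Longrightarrow> ev0 (E s) = ev0 s"
begin

interpretation E: chain_iso "ps_space N" "ps_diff act dN xi1" "ps_space N" "ps_diff act dN xi2" E
  by (rule iso)

lemma coh_conn_chain_iso:
  assumes Y: "Y \<in> coh N dN k"
  shows "coh_map (ps_space N) (ps_diff act dN xi2) (Suc k) E
      (coh_conn (ps_space N) (ps_diff act dN xi1) (ps_space N) (ps_diff act dN xi1) tshift ev0 k Y)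
    = coh_conn (ps_space N) (ps_diff act dN xi2) (ps_space N) (ps_diff act dN xi2) tshift ev0 k Y"
proof -
  let ?PS = "ps_space N" and ?D1 = "ps_diff act dN xi1" and ?D2 = "ps_diff act dN xi2"
  have y: "crep Y \<in> cocyc N dN k" using cochain_complex.crep_cocyc[OF N_complex Y] .
  define a1 where "a1 = (SOME a. a \<in> ?PS (Suc k) \<and> (\<exists>b\<in>?PS k. ev0 b = crep Y \<and> tshift a = ?D1 b))"
  define a2 where "a2 = (SOME a. a \<in> ?PS (Suc k) \<and> (\<exists>b\<in>?PS k. ev0 b = crep Y \<and> tshift a = ?D2 b))"
  obtain b1 where a1: "a1 \<in> ?PS (Suc k)" "b1 \<in> ?PS k" "ev0 b1 = crep Y" "tshift a1 = ?D1 b1"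
    using someI_ex[OF connecting_witness_exists[OF xi1 y]] unfolding a1_def[symmetric] by blast
  obtain b2 where a2: "a2 \<in> ?PS (Suc k)" "b2 \<in> ?PS k" "ev0 b2 = crep Y" "tshift a2 = ?D2 b2"
    using someI_ex[OF connecting_witness_exists[OF xi2 y]] unfolding a2_def[symmetric] by blast
  define c where "c = E b1 - b2"
  have c: "c \<in> ?PS k" unfolding c_def by (rule E.C2.diff_closed[OF E.map_closed[OF a1(2)] a2(2)])
  have "c 0 = 0" using a1(3) a2(3) E_ev0[OF a1(2)] by (simp add: c_def ev0_def)
  then obtain w where w: "w \<in> ?PS k" "tshift w = c"
    using c by (intro that[of "\<lambda>n. c (Suc n)"]) (auto simp: ps_space_def tshift_def fun_eq_iff)
  have "tshift (E a1 - a2) = E (tshift a1) - tshift a2" by (simp add: tshift_diff E_tshift[OF a1(1)])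
  also have "\<dots> = ?D2 (E b1) - ?D2 b2" using a1(4) a2(4) E.map_d[OF a1(2)] by simp
  also have "\<dots> = ?D2 c" unfolding c_def by (rule E.C2.d_diff[OF E.map_closed[OF a1(2)] a2(2), symmetric])
  also have "\<dots> = tshift (?D2 w)" using w(2) tshift_ps_diff[OF xi2(1), of w] by simp
  finally have "E a1 - a2 = ?D2 w" by (rule tshift_inj)
  then have "ccls ?PS ?D2 (Suc k) (E a1) = ccls ?PS ?D2 (Suc k) a2"
    using w(1) by (intro E.C2.ccls_eqI) (simp add: cobound_def)
  then show ?thesis unfolding coh_conn_def a1_def[symmetric] a2_def[symmetric] E.coh_map_ccls_iso[OF a1(1)] .
qed

lemma couple_iso_of_chain_iso:
  assumes E_scale: "\<And>s q c. s \<in> ps_space N q \<Longrightarrow> E (ps_smul sN c s) = ps_smul sN c (E s)"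
  shows "couple_iso (deformation_couple sN N act dN xi1) (deformation_couple sN N act dN xi2)"
proof -
  let ?PS = "ps_space N" and ?D1 = "ps_diff act dN xi1" and ?D2 = "ps_diff act dN xi2"
  define phi where "phi k = coh_map ?PS ?D2 k E" for k
  have cls: "\<exists>x\<in>?PS k. X = ccls ?PS ?D1 k x" if "X \<in> coh ?PS ?D1 k" for X k
    using that by (auto simp: coh_def cocyc_def)
  note phi_ccls = E.coh_map_ccls_iso[folded phi_def]
  show ?thesis
    unfolding couple_iso_def deformation_couple_def Let_def vs_couple.simps
  proof (intro exI[where x = phi] exI[where x = "\<lambda>k. id"] allI conjI ballI)
    fix k
    show "bij_betw (phi k) (coh ?PS ?D1 k) (coh ?PS ?D2 k)"
      unfolding phi_def by (rule E.bij_betw_coh_map)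
    fix c X Y assume "X \<in> coh ?PS ?D1 k" "Y \<in> coh ?PS ?D1 k"
    with cls obtain x y where x: "x \<in> ?PS k" "X = ccls ?PS ?D1 k x" and y: "y \<in> ?PS k" "Y = ccls ?PS ?D1 k y"
      by meson
    show "phi k (coh_add ?PS ?D1 k X Y) = coh_add ?PS ?D2 k (phi k X) (phi k Y)"
      using x y by (simp add: E.C1.coh_add_ccls E.C2.coh_add_ccls phi_ccls E.C1.add_closed E.map_add)
    show "phi k (coh_smul (ps_smul sN) ?PS ?D1 k c X) = coh_smul (ps_smul sN) ?PS ?D2 k c (phi k X)"
      using x by (simp add: coh_smul_ps_ccls[OF xi1] coh_smul_ps_ccls[OF xi2] phi_ccls ps_smul_closed
          E_scale E.map_closed)
    show "phi k (coh_map ?PS ?D1 k tshift X) = coh_map ?PS ?D2 k tshift (phi k X)"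
      using x by (simp add: coh_map_tshift_ccls[OF xi1] coh_map_tshift_ccls[OF xi2] phi_ccls
          tshift_closed E_tshift E.map_closed)
    show "id (coh_map N dN k ev0 X) = coh_map N dN k ev0 (phi k X)"
      using x by (simp add: coh_map_ev0_ccls[OF xi1] coh_map_ev0_ccls[OF xi2] phi_ccls E_ev0 E.map_closed)
  next
    fix k Y assume "Y \<in> coh N dN k"
    then show "phi (Suc k) (coh_conn ?PS ?D1 ?PS ?D1 tshift ev0 k Y)
        = coh_conn ?PS ?D2 ?PS ?D2 tshift ev0 k (id Y)"
      unfolding phi_def by (simp add: coh_conn_chain_iso)
  qed (simp_all add: bij_betw_id)
qed

end

definition exp_coeff :: "'a \<Rightarrow> nat \<Rightarrow> 'm \<Rightarrow> 'm" where
  "exp_coeff f k x = sN (inverse (fact k)) ((act f ^^ k) x)"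

definition exp_mult :: "'a \<Rightarrow> (nat \<Rightarrow> 'm) \<Rightarrow> nat \<Rightarrow> 'm" where
  "exp_mult f s = (\<lambda>n. \<Sum>k\<le>n. exp_coeff f k (s (n - k)))"

function exp_mult_preimage :: "'a \<Rightarrow> (nat \<Rightarrow> 'm) \<Rightarrow> nat \<Rightarrow> 'm" where
  "exp_mult_preimage f t n = t n - (\<Sum>k<n. exp_coeff f (Suc k) (exp_mult_preimage f t (n - Suc k)))"
  by pat_completeness auto
termination by (relation "measure (\<lambda>(f, t, n). n)") auto

declare exp_mult_preimage.simps [simp del]

context
  fixes f assumes f: "f \<in> A 0"
begin

lemma df_closed: "dA f \<in> A 1"
  using dA_closed[OF f] by simp

lemma act_f_commute: "a \<in> A p \<Longrightarrow> x \<in> N q \<Longrightarrow> act f (act a x) = act a (act f x)"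
  using act_mul[OF f, of a p x q] act_mul[of a p f 0 x q] f mul_graded_comm[OF f, of a p] by simp

lemma act_f_pow_closed: "x \<in> N q \<Longrightarrow> (act f ^^ k) x \<in> N q"
  by (induct k) (use act_closed[OF f] in fastforce)+

lemma act_f_pow_add:
  assumes "x \<in> N q" "y \<in> N q"
  shows "(act f ^^ k) (x + y) = (act f ^^ k) x + (act f ^^ k) y"
  by (induct k) (simp_all add: act_add_right[OF f act_f_pow_closed[OF assms(1)] act_f_pow_closed[OF assms(2)]])

lemma act_f_pow_scale:
  assumes "x \<in> N q"
  shows "(act f ^^ k) (sN c x) = sN c ((act f ^^ k) x)"
  by (induct k) (simp_all add: act_scale_right[OF f act_f_pow_closed[OF assms]])

lemma act_f_pow_commute:
  assumes "a \<in> A p" "x \<in> N q"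
  shows "(act f ^^ k) (act a x) = act a ((act f ^^ k) x)"
  by (induct k) (simp_all add: act_f_commute[OF assms(1) act_f_pow_closed[OF assms(2)]])

lemma dN_act_f_pow:
  assumes x: "x \<in> N q"
  shows "dN ((act f ^^ Suc k) x) = (act f ^^ Suc k) (dN x) + sN (of_nat (Suc k)) (act (dA f) ((act f ^^ k) x))"
proof (induct k)
  case 0
  then show ?case using dN_act[OF f x] by (simp add: add.commute)
next
  case (Suc k)
  let ?y = "(act f ^^ Suc k) x" and ?g = "act (dA f) ((act f ^^ Suc k) x)"
  have y: "?y \<in> N q" using act_f_pow_closed[OF x] .
  have g: "act (dA f) ((act f ^^ k) x) \<in> N (Suc q)" using act_closed[OF df_closed act_f_pow_closed[OF x]] by simp
  have dx: "(act f ^^ Suc k) (dN x) \<in> N (Suc q)" using act_f_pow_closed dN_closed[OF x] by blast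
  have "dN ((act f ^^ Suc (Suc k)) x) = ?g + act f (dN ?y)"
    using dN_act[OF f y] by simp
  also have "\<dots> = ?g + ((act f ^^ Suc (Suc k)) (dN x) + sN (of_nat (Suc k)) ?g)"
    using Suc act_add_right[OF f dx N_scale[OF g]] act_scale_right[OF f g]
      act_f_commute[OF df_closed act_f_pow_closed[OF x]] by simp
  also have "\<dots> = (act f ^^ Suc (Suc k)) (dN x) + sN (of_nat (Suc (Suc k))) ?g"
    by (simp only: of_nat_Suc[of "Suc k"] N.scale_left_distrib N.scale_one add.left_commute)
  finally show ?case .
qed

lemma exp_coeff_closed: "x \<in> N q \<Longrightarrow> exp_coeff f k x \<in> N q"
  by (simp add: exp_coeff_def N_scale act_f_pow_closed)

lemma exp_coeff_add: "x \<in> N q \<Longrightarrow> y \<in> N q \<Longrightarrow> exp_coeff f k (x + y) = exp_coeff f k x + exp_coeff f k y"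
  by (simp add: exp_coeff_def act_f_pow_add N.scale_right_distrib)

lemma exp_coeff_scale: "x \<in> N q \<Longrightarrow> exp_coeff f k (sN c x) = sN c (exp_coeff f k x)"
  by (simp add: exp_coeff_def act_f_pow_scale N.scale_left_commute)

lemma exp_coeff_zero: "exp_coeff f k 0 = 0"
  using exp_coeff_add[of 0 0 0 k] N_zero[of 0] by simp

lemma exp_coeff_0: "exp_coeff f 0 x = x"
  by (simp add: exp_coeff_def)

lemma exp_coeff_act:
  assumes "a \<in> A p" "x \<in> N q"
  shows "exp_coeff f k (act a x) = act a (exp_coeff f k x)"
  by (simp add: exp_coeff_def act_f_pow_commute[OF assms] act_scale_right[OF assms(1) act_f_pow_closed[OF assms(2)]])

lemma dN_exp_coeff_Suc:
  assumes x: "x \<in> N q"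
  shows "dN (exp_coeff f (Suc k) x) = exp_coeff f (Suc k) (dN x) + act (dA f) (exp_coeff f k x)"
proof -
  have fact_Suc_inverse: "inverse (fact (Suc k)) * of_nat (Suc k) = (inverse (fact k) :: 'k)"
    by (simp add: inverse_mult_distrib del: of_nat_Suc)
  have "dN (exp_coeff f (Suc k) x) = sN (inverse (fact (Suc k))) (dN ((act f ^^ Suc k) x))"
    unfolding exp_coeff_def using dN_scale[OF act_f_pow_closed[OF x]] .
  also have "\<dots> = exp_coeff f (Suc k) (dN x)
      + sN (inverse (fact (Suc k)) * of_nat (Suc k)) (act (dA f) ((act f ^^ k) x))"
    by (simp only: dN_act_f_pow[OF x] exp_coeff_def N.scale_right_distrib N.scale_scale)
  also have "\<dots> = exp_coeff f (Suc k) (dN x) + act (dA f) (exp_coeff f k x)"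
    by (simp only: fact_Suc_inverse exp_coeff_def act_scale_right[OF df_closed act_f_pow_closed[OF x]])
  finally show ?thesis .
qed

lemma exp_mult_closed: "s \<in> ps_space N q \<Longrightarrow> exp_mult f s \<in> ps_space N q"
  by (auto simp: ps_space_def exp_mult_def intro!: N_sum exp_coeff_closed)

lemma exp_mult_add:
  assumes "s \<in> ps_space N q" "t \<in> ps_space N q"
  shows "exp_mult f (s + t) = exp_mult f s + exp_mult f t"
proof -
  have "s j \<in> N q" "t j \<in> N q" for j using assms by (simp_all add: ps_space_def)
  then show ?thesis by (simp add: exp_mult_def fun_eq_iff exp_coeff_add[where q = q] sum.distrib)
qed

lemma exp_mult_scale:
  assumes "s \<in> ps_space N q"
  shows "exp_mult f (ps_smul sN c s) = ps_smul sN c (exp_mult f s)"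
proof -
  have "s j \<in> N q" for j using assms by (simp add: ps_space_def)
  then show ?thesis
    by (simp add: exp_mult_def ps_smul_def fun_eq_iff exp_coeff_scale[where q = q] N.scale_sum_right)
qed

lemma exp_mult_ev0: "ev0 (exp_mult f s) = ev0 s"
  by (simp add: exp_mult_def ev0_def exp_coeff_0)

lemma exp_mult_tshift: "exp_mult f (tshift s) = tshift (exp_mult f s)"
proof
  fix n show "exp_mult f (tshift s) n = tshift (exp_mult f s) n"
  proof (cases n)
    case (Suc m)
    have "exp_mult f (tshift s) n = (\<Sum>k\<le>m. exp_coeff f k (tshift s (Suc m - k))) + exp_coeff f (Suc m) (tshift s 0)"
      by (simp add: exp_mult_def Suc)
    also have "\<dots> = (\<Sum>k\<le>m. exp_coeff f k (s (m - k)))"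
      by (auto simp: tshift_def exp_coeff_zero Suc_diff_le intro!: sum.cong)
    finally show ?thesis by (simp add: tshift_def exp_mult_def Suc)
  qed (simp add: exp_mult_def tshift_def exp_coeff_zero)
qed

lemma exp_mult_eq: "exp_mult f s n = s n + (\<Sum>k<n. exp_coeff f (Suc k) (s (n - Suc k)))"
  unfolding exp_mult_def by (simp only: sum.atMost_shift exp_coeff_0) simp

lemma exp_mult_inj:
  assumes "s \<in> ps_space N q" "t \<in> ps_space N q" "exp_mult f s = exp_mult f t"
  shows "s = t"
proof
  fix n show "s n = t n"
  proof (induct n rule: less_induct)
    case (less n)
    have "(\<Sum>k<n. exp_coeff f (Suc k) (s (n - Suc k))) = (\<Sum>k<n. exp_coeff f (Suc k) (t (n - Suc k)))"
      using less by (intro sum.cong) auto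
    then show ?case using exp_mult_eq[of s n] exp_mult_eq[of t n] assms(3) by simp
  qed
qed

lemma exp_mult_preimage_closed:
  assumes t: "t \<in> ps_space N q"
  shows "exp_mult_preimage f t \<in> ps_space N q"
proof -
  have "exp_mult_preimage f t n \<in> N q" for n
  proof (induct n rule: less_induct)
    case (less n)
    then have "(\<Sum>k<n. exp_coeff f (Suc k) (exp_mult_preimage f t (n - Suc k))) \<in> N q"
      by (intro N_sum exp_coeff_closed) auto
    then show ?case
      using t by (subst exp_mult_preimage.simps) (simp add: N_diff ps_space_def)
  qed
  then show ?thesis by (simp add: ps_space_def)
qed

lemma exp_mult_preimage: "exp_mult f (exp_mult_preimage f t) = t"
proof
  fix n show "exp_mult f (exp_mult_preimage f t) n = t n"
    by (simp only: exp_mult_eq exp_mult_preimage.simps[of f t n]) simp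
qed

lemma bij_betw_exp_mult: "bij_betw (exp_mult f) (ps_space N q) (ps_space N q)"
proof (rule bij_betwI')
  fix y assume "y \<in> ps_space N q"
  then show "\<exists>x\<in>ps_space N q. y = exp_mult f x"
    using exp_mult_preimage_closed exp_mult_preimage by metis
qed (use exp_mult_inj exp_mult_closed in blast)+

text \<open>Coefficient \<open>m + 1\<close> of \<open>e\<^sup>t\<^sup>f(d + t\<xi>\<^sub>1)s\<close> versus \<open>(d + t\<xi>\<^sub>2)e\<^sup>t\<^sup>f s\<close>: the extra terms
  \<open>\<Sum> df f\<^sup>k/k! s\<^sub>m\<^sub>-\<^sub>k\<close> produced by \<open>d\<close> are exactly those of \<open>\<xi>\<^sub>1 = df + \<xi>\<^sub>2\<close>.\<close>

lemma exp_mult_ps_diff: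
  assumes xi2: "xi2 \<in> A 1" and s: "s \<in> ps_space N q"
  shows "exp_mult f (ps_diff act dN (dA f + xi2) s) = ps_diff act dN xi2 (exp_mult f s)"
proof
  fix n
  let ?df = "dA f"
  have sm: "s j \<in> N q" for j using s by (simp add: ps_space_def)
  have xi1: "?df + xi2 \<in> A 1" using A_add[OF df_closed xi2] .
  have dsm: "dN (s j) \<in> N (Suc q)" for j using dN_closed[OF sm] .
  have x1m: "act (?df + xi2) (s j) \<in> N (Suc q)" for j using act_closed[OF xi1 sm] by simp
  show "exp_mult f (ps_diff act dN (?df + xi2) s) n = ps_diff act dN xi2 (exp_mult f s) n"
  proof (cases n)
    case 0
    then show ?thesis by (simp add: exp_mult_def ps_diff_def exp_coeff_0)
  next
    case (Suc m)
    have "exp_mult f (ps_diff act dN (?df + xi2) s) n =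
       (\<Sum>k\<le>Suc m. exp_coeff f k (dN (s (Suc m - k)))) +
       (\<Sum>k\<le>Suc m. exp_coeff f k (if Suc m - k = 0 then 0 else act (?df + xi2) (s (Suc m - k - 1))))"
      unfolding exp_mult_def ps_diff_def Suc sum.distrib[symmetric]
      by (rule sum.cong) (auto simp: exp_coeff_zero intro!: exp_coeff_add[OF dsm] x1m N_zero)
    also have "(\<Sum>k\<le>Suc m. exp_coeff f k (if Suc m - k = 0 then 0 else act (?df + xi2) (s (Suc m - k - 1)))) =
        (\<Sum>k\<le>m. act ?df (exp_coeff f k (s (m - k))) + act xi2 (exp_coeff f k (s (m - k))))"
      by (auto simp: exp_coeff_zero Suc_diff_le exp_coeff_act[OF xi1 sm]
          act_add_left[OF df_closed xi2 exp_coeff_closed[OF sm]] intro!: sum.cong)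
    finally have L: "exp_mult f (ps_diff act dN (?df + xi2) s) n =
        (\<Sum>k\<le>Suc m. exp_coeff f k (dN (s (Suc m - k)))) +
        ((\<Sum>k\<le>m. act ?df (exp_coeff f k (s (m - k)))) + (\<Sum>k\<le>m. act xi2 (exp_coeff f k (s (m - k)))))"
      by (simp add: sum.distrib)
    have "dN (exp_mult f s n) = (\<Sum>k\<le>Suc m. dN (exp_coeff f k (s (Suc m - k))))"
      unfolding exp_mult_def Suc by (rule dN_sum) (rule exp_coeff_closed[OF sm])
    also have "\<dots> = dN (s (Suc m)) + (\<Sum>k\<le>m. dN (exp_coeff f (Suc k) (s (m - k))))"
      by (simp only: sum.atMost_Suc_shift exp_coeff_0) simp
    also have "\<dots> = (\<Sum>k\<le>Suc m. exp_coeff f k (dN (s (Suc m - k)))) +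
        (\<Sum>k\<le>m. act ?df (exp_coeff f k (s (m - k))))"
      by (simp only: sum.atMost_Suc_shift exp_coeff_0 dN_exp_coeff_Suc[OF sm] sum.distrib)
        (simp add: add.assoc)
    finally have R1: "dN (exp_mult f s n) = (\<Sum>k\<le>Suc m. exp_coeff f k (dN (s (Suc m - k)))) +
        (\<Sum>k\<le>m. act ?df (exp_coeff f k (s (m - k))))" .
    have R2: "act xi2 (exp_mult f s m) = (\<Sum>k\<le>m. act xi2 (exp_coeff f k (s (m - k))))"
      unfolding exp_mult_def by (rule act_sum[OF xi2]) (rule exp_coeff_closed[OF sm])
    show ?thesis using L R1 R2 Suc by (simp add: ps_diff_def add.assoc)
  qed
qed

lemma exp_mult_chain_iso:
  assumes xi2: "xi2 \<in> A 1" "dA xi2 = 0"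
  shows "chain_iso (ps_space N) (ps_diff act dN (dA f + xi2)) (ps_space N) (ps_diff act dN xi2) (exp_mult f)"
proof -
  have "dA (dA f + xi2) = 0"
    using dA_add[OF df_closed xi2(1)] dA_dA[OF f] xi2(2) by simp
  interpret C1: cochain_complex "ps_space N" "ps_diff act dN (dA f + xi2)"
    by (rule ps_complex) (use A_add[OF df_closed xi2(1)] \<open>dA (dA f + xi2) = 0\<close> in auto)
  interpret C2: cochain_complex "ps_space N" "ps_diff act dN xi2" by (rule ps_complex[OF xi2])
  show ?thesis
    by unfold_locales (auto simp: exp_mult_add exp_mult_ps_diff[OF xi2(1)] bij_betw_exp_mult)
qed

end

end

theorem proposition3p1:
  fixes sA :: "'k::field_char_0 \<Rightarrow> 'a::ab_group_add \<Rightarrow> 'a"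
    and A :: "nat \<Rightarrow> 'a set" and mul :: "'a \<Rightarrow> 'a \<Rightarrow> 'a" and one :: 'a and dA :: "'a \<Rightarrow> 'a"
    and sN :: "'k \<Rightarrow> 'm::ab_group_add \<Rightarrow> 'm"
    and N :: "nat \<Rightarrow> 'm set" and act :: "'a \<Rightarrow> 'm \<Rightarrow> 'm" and dN :: "'m \<Rightarrow> 'm"
    and xi1 xi2 f :: 'a
  assumes "cdga sA A mul one dA"
    and "dgm sA A mul one dA sN N act dN"
    and "xi1 \<in> A 1" and "dA xi1 = 0"
    and "xi2 \<in> A 1" and "dA xi2 = 0"
    and "f \<in> A 0" and "xi1 - xi2 = dA f"
  shows "couple_iso (deformation_couple sN N act dN xi1) (deformation_couple sN N act dN xi2)"
proof -
  interpret dg_module sA A mul one dA sN N act dN using assms(1,2) by unfold_locales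
  have "xi1 = dA f + xi2" using assms(8) by (simp add: algebra_simps)
  then have iso: "chain_iso (ps_space N) (ps_diff act dN xi1) (ps_space N) (ps_diff act dN xi2) (exp_mult f)"
    using exp_mult_chain_iso[OF assms(7) assms(5,6)] by simp
  show ?thesis
    by (rule couple_iso_of_chain_iso[OF assms(3-6) iso])
      (simp_all add: exp_mult_tshift exp_mult_ev0 exp_mult_scale assms(7))
qed

end
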